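(* Let $\Lambda>0$ and let $a_0,b_0>0$ be constants. Put $\theta(x^8)=\sqrt{2\Lambda}\,x^8$ and let $U\subset\mathbb{R}^8$ be the open set of points $(x^1,\dots,x^8)$ with $\sin\theta(x^8)\neq 0$. For either choice of the sign $\epsilon\in\{+1,-1\}$ and either choice of the sign $\sigma\in\{+1,-1\}$, define on $U$ $$a(x^4,x^8)=a_0\,e^{\epsilon\frac13\sqrt{\Lambda/2}\,x^4}\,\big(\sin^2\theta(x^8)\big)^{1/12},\qquad b(x^4,x^8)=b_0\,e^{-\epsilon\frac13\sqrt{\Lambda/2}\,x^4}\,\big(\sin^2\theta(x^8)\big)^{1/12},$$ $$\varphi(x^4,x^8)=\sigma\,\tfrac12\sqrt{\tfrac56}\,\ln\!\Big[\tan^2\!\big(\tfrac12\theta(x^8)\big)\Big].$$ Then the metric $$ds^2=a^2\big[(dx^1)^2+(dx^2)^2+(dx^3)^2\big]-(dx^4)^2-b^2\big[(dx^5)^2+(dx^6)^2+(dx^7)^2\big]+(dx^8)^2$$ together with the scalar field $\varphi$ satisfies on $U$ the coupled Einstein–massless-scalar field equations $$G_{\mu\nu}+\Lambda g_{\mu\nu}=T_{\mu\nu},\qquad T_{\mu\nu}=\partial_\mu\varphi\,\partial_\nu\varphi-\tfrac12 g_{\mu\nu}\,g^{\alpha\beta}\partial_\alpha\varphi\,\partial_\beta\varphi,\qquad \frac{1}{\sqrt{|\det g|}}\,\partial_\mu\!\Big(\sqrt{|\det g|}\,g^{\mu\nu}\partial_\nu\varphi\Big)=0 .$$ Moreover,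 for this solution the relative expansion rate $\ell=\tfrac12\,\partial_{x^4}\ln(b/a)$ equals the constant $-\epsilon\,\tfrac13\sqrt{\Lambda/2}$, and the functions $a,b,\varphi$ are periodic in $x^8$ with common minimal positive period $\pi\sqrt{2/\Lambda}$ (so this common period equals $2\pi$ exactly when $\Lambda=\tfrac12$).
   Context: Coordinates $(x^1,\dots,x^8)$ on (an open subset of) $\mathbb{R}^8$; the metric has signature $(4,4)$, with $x^1,x^2,x^3,x^8$ spacelike and $x^4,\dots,x^7$ timelike. $G_{\mu\nu}=R_{\mu\nu}-\tfrac12 R\,g_{\mu\nu}$ is the Einstein tensor of the Levi-Civita connection of $g$, with the Landau–Lifshitz (MTW "spacelike") sign conventions for the Riemann and Ricci tensors. Units are chosen with $8\pi\mathbb{G}=1$. $\Lambda$ is the cosmological constant. The scalar field $\varphi$ is real, massless, minimally coupled, with zero potential (action density $\sqrt{|\det g|}\,[\tfrac12(R-2\Lambda)-\tfrac12 g^{\mu\nu}\partial_\mu\varphi\,\partial_\nu\varphi]$). *)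

theory Defs
  imports "HOL-Analysis.Analysis"
begin

text \<open>Points are vectors x :: real^'n; the coordinate x^i is x$i.
  A metric is a field of symmetric matrices g :: real^'n \<Rightarrow> real^'n^'n,
  with components g_{ij}(x) = g x $ i $ j.\<close>

definition partial :: "'n::finite \<Rightarrow> (real^'n \<Rightarrow> real) \<Rightarrow> real^'n \<Rightarrow> real" where
  "partial i f x = deriv (\<lambda>t. f (x + t *\<^sub>R axis i 1)) 0"

definition ginv :: "(real^'n \<Rightarrow> real^'n^'n) \<Rightarrow> real^'n \<Rightarrow> 'n::finite \<Rightarrow> 'n \<Rightarrow> real" where
  "ginv g x i j = matrix_inv (g x) $ i $ j"

definition christoffel ::
  "(real^'n \<Rightarrow> real^'n^'n) \<Rightarrow> 'n::finite \<Rightarrow> 'n \<Rightarrow> 'n \<Rightarrow> real^'n \<Rightarrow> real" where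
  "christoffel g k i j x = (1/2) * (\<Sum>l\<in>UNIV. ginv g x k l *
     (partial i (\<lambda>y. g y $ l $ j) x + partial j (\<lambda>y. g y $ l $ i) x
      - partial l (\<lambda>y. g y $ i $ j) x))"

text \<open>Riemann tensor R^r_{s m n} (MTW / Landau-Lifshitz convention):
  R^r_{smn} = d_m Gamma^r_{ns} - d_n Gamma^r_{ms} + Gamma^r_{ml} Gamma^l_{ns} - Gamma^r_{nl} Gamma^l_{ms}.\<close>
definition riemann ::
  "(real^'n \<Rightarrow> real^'n^'n) \<Rightarrow> 'n::finite \<Rightarrow> 'n \<Rightarrow> 'n \<Rightarrow> 'n \<Rightarrow> real^'n \<Rightarrow> real" where
  "riemann g r s m n x =
     partial m (\<lambda>y. christoffel g r n s y) x - partial n (\<lambda>y. christoffel g r m s y) x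
     + (\<Sum>l\<in>UNIV. christoffel g r m l x * christoffel g l n s x)
     - (\<Sum>l\<in>UNIV. christoffel g r n l x * christoffel g l m s x)"

definition ricci :: "(real^'n \<Rightarrow> real^'n^'n) \<Rightarrow> 'n::finite \<Rightarrow> 'n \<Rightarrow> real^'n \<Rightarrow> real" where
  "ricci g s n x = (\<Sum>r\<in>UNIV. riemann g r s r n x)"

definition scalar_curv :: "(real^'n::finite \<Rightarrow> real^'n^'n) \<Rightarrow> real^'n \<Rightarrow> real" where
  "scalar_curv g x = (\<Sum>s\<in>UNIV. \<Sum>n\<in>UNIV. ginv g x s n * ricci g s n x)"

definition einstein :: "(real^'n \<Rightarrow> real^'n^'n) \<Rightarrow> 'n::finite \<Rightarrow> 'n \<Rightarrow> real^'n \<Rightarrow> real" where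
  "einstein g m n x = ricci g m n x - (1/2) * scalar_curv g x * g x $ m $ n"

definition scalar_T ::
  "(real^'n \<Rightarrow> real^'n^'n) \<Rightarrow> (real^'n \<Rightarrow> real) \<Rightarrow> 'n::finite \<Rightarrow> 'n \<Rightarrow> real^'n \<Rightarrow> real" where
  "scalar_T g \<phi> m n x = partial m \<phi> x * partial n \<phi> x
     - (1/2) * g x $ m $ n *
       (\<Sum>a\<in>UNIV. \<Sum>b\<in>UNIV. ginv g x a b * partial a \<phi> x * partial b \<phi> x)"

definition box :: "(real^'n::finite \<Rightarrow> real^'n^'n) \<Rightarrow> (real^'n \<Rightarrow> real) \<Rightarrow> real^'n \<Rightarrow> real" where
  "box g \<phi> x = (1 / sqrt \<bar>det (g x)\<bar>) *
     (\<Sum>m\<in>UNIV. partial m (\<lambda>y. sqrt \<bar>det (g y)\<bar> *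
        (\<Sum>n\<in>UNIV. ginv g y m n * partial n \<phi> y)) x)"

definition sol_theta :: "real \<Rightarrow> real \<Rightarrow> real" where
  "sol_theta \<Lambda> x8 = sqrt (2 * \<Lambda>) * x8"

definition sol_a :: "real \<Rightarrow> real \<Rightarrow> real \<Rightarrow> real \<Rightarrow> real \<Rightarrow> real" where
  "sol_a \<Lambda> \<epsilon> a0 x4 x8 =
     a0 * exp (\<epsilon> * (1/3) * sqrt (\<Lambda>/2) * x4) * ((sin (sol_theta \<Lambda> x8))^2) powr (1/12)"

definition sol_b :: "real \<Rightarrow> real \<Rightarrow> real \<Rightarrow> real \<Rightarrow> real \<Rightarrow> real" where
  "sol_b \<Lambda> \<epsilon> b0 x4 x8 =
     b0 * exp (- \<epsilon> * (1/3) * sqrt (\<Lambda>/2) * x4) * ((sin (sol_theta \<Lambda> x8))^2) powr (1/12)"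

definition sol_phi :: "real \<Rightarrow> real \<Rightarrow> real \<Rightarrow> real \<Rightarrow> real" where
  "sol_phi \<Lambda> \<sigma> x4 x8 =
     \<sigma> * (1/2) * sqrt (5/6) * ln ((tan (sol_theta \<Lambda> x8 / 2))^2)"

text \<open>The metric ds^2 = a^2 (dx1^2+dx2^2+dx3^2) - dx4^2 - b^2 (dx5^2+dx6^2+dx7^2) + dx8^2.
  The index type 8 has the eight distinct elements 1,...,8 (8 = 0 mod 8).\<close>
definition sol_metric :: "real \<Rightarrow> real \<Rightarrow> real \<Rightarrow> real \<Rightarrow> real^8 \<Rightarrow> real^8^8" where
  "sol_metric \<Lambda> \<epsilon> a0 b0 x = (\<chi> i j. if i \<noteq> j then 0
     else if i \<in> {1,2,3} then (sol_a \<Lambda> \<epsilon> a0 (x$4) (x$8))^2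
     else if i = 4 then -1
     else if i \<in> {5,6,7} then - ((sol_b \<Lambda> \<epsilon> b0 (x$4) (x$8))^2)
     else if i = 8 then 1 else 0)"

definition sol_domain :: "real \<Rightarrow> (real^8) set" where
  "sol_domain \<Lambda> = {x. sin (sol_theta \<Lambda> (x$8)) \<noteq> 0}"

definition common_period :: "real \<Rightarrow> real \<Rightarrow> real \<Rightarrow> real \<Rightarrow> real \<Rightarrow> real \<Rightarrow> bool" where
  "common_period \<Lambda> \<epsilon> \<sigma> a0 b0 q \<longleftrightarrow>
     (\<forall>x4 x8. sin (sol_theta \<Lambda> x8) \<noteq> 0 \<longrightarrow>
        sin (sol_theta \<Lambda> (x8 + q)) \<noteq> 0 \<and>
        sol_a \<Lambda> \<epsilon> a0 x4 (x8 + q) = sol_a \<Lambda> \<epsilon> a0 x4 x8 \<and>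
        sol_b \<Lambda> \<epsilon> b0 x4 (x8 + q) = sol_b \<Lambda> \<epsilon> b0 x4 x8 \<and>
        sol_phi \<Lambda> \<sigma> x4 (x8 + q) = sol_phi \<Lambda> \<sigma> x4 x8)"

end

theory Submission
  imports Defs
begin

text \<open>The metric is diagonal, its entries depending on \<open>x\<^sup>4\<close> and \<open>x\<^sup>8\<close> only, and each
  \<open>\<bar>g\<^sub>k\<^sub>k\<bar>\<close> is an exponential in \<open>x\<^sup>4\<close> times a power of \<open>sin\<^sup>2 \<theta>\<close>. Hence the Christoffel
  symbols are built from logarithmic derivatives, and a componentwise computation gives
  \<open>R\<^sub>\<mu>\<^sub>\<nu> = (\<Lambda>/3) g\<^sub>\<mu>\<^sub>\<nu> + \<partial>\<^sub>\<mu>\<phi> \<partial>\<^sub>\<nu>\<phi>\<close>, which in dimension 8 is the trace-reversed form of the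
  Einstein--scalar equations. The scalar field equation holds because the flux
  \<open>\<surd>\<bar>g\<bar> g\<^sup>8\<^sup>8 \<partial>\<^sub>8\<phi>\<close> is a constant multiple of \<open>sgn (sin \<theta>)\<close>, hence locally constant.
  Finally \<open>ln (b/a)\<close> is linear in \<open>x\<^sup>4\<close>, and \<open>a, b, \<phi>\<close> depend on \<open>x\<^sup>8\<close> through
  \<open>sin\<^sup>2 \<theta>\<close> and \<open>tan\<^sup>2 (\<theta>/2)\<close>, whose only common periods in \<open>\<theta>\<close> are multiples of \<open>2\<pi>\<close>.\<close>

lemma UNIV_8: "(UNIV :: 8 set) = {1, 2, 3, 4, 5, 6, 7, 8}"
  by (rule card_subset_eq[symmetric]) simp_all

lemma exhaust_8: "k = 1 \<or> k = 2 \<or> k = 3 \<or> k = 4 \<or> k = 5 \<or> k = 6 \<or> k = 7 \<or> k = (8 :: 8)"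
  using UNIV_I[of k] unfolding UNIV_8 by blast

lemma sum_UNIV_8: "sum f (UNIV :: 8 set) = f 1 + f 2 + f 3 + f 4 + f 5 + f 6 + f 7 + f 8"
  unfolding UNIV_8 by (simp add: add.assoc)

lemma prod_UNIV_8: "prod f (UNIV :: 8 set) = f 1 * f 2 * f 3 * f 4 * f 5 * f 6 * f 7 * f 8"
  unfolding UNIV_8 by (simp add: mult.assoc)

lemma distinct_8: "distinct [1, 2, 3, 4, 5, 6, 7, 8 :: 8]" "distinct [8, 7, 6, 5, 4, 3, 2, 1 :: 8]"
  by simp_all

lemmas numeral_8_neq =
  distinct_8[simplified distinct.simps list.set insert_iff empty_iff de_Morgan_disj simp_thms]

section \<open>Coordinate partial derivatives\<close>

lemma partial_cong_open:
  assumes "open U" "x \<in> U" "\<And>y. y \<in> U \<Longrightarrow> f y = h y"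
  shows "partial i f x = partial i h x"
  unfolding partial_def
proof (rule deriv_cong_ev)
  let ?S = "(\<lambda>t::real. x + t *\<^sub>R axis i 1) -` U"
  have "open ?S"
    by (rule open_vimage[OF assms(1)]) (intro continuous_intros)
  moreover have "0 \<in> ?S" using assms(2) by simp
  ultimately show "\<forall>\<^sub>F t in nhds 0. f (x + t *\<^sub>R axis i 1) = h (x + t *\<^sub>R axis i 1)"
    unfolding eventually_nhds using assms(3) by blast
qed simp

lemma partial_const: "partial i (\<lambda>y. c) x = 0"
  unfolding partial_def by simp

lemma partial_coord:
  fixes f :: "real \<Rightarrow> real" and x :: "real^'n::finite"
  assumes "(f has_real_derivative D) (at (x$j))"
  shows "partial i (\<lambda>y. f (y$j)) x = (if i = j then D else 0)"
proof -
  have "deriv (\<lambda>t. f (x$j + t)) 0 = D"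
    using DERIV_shift[of f D 0 "x$j"] assms by (simp add: add.commute DERIV_imp_deriv)
  then show ?thesis
    unfolding partial_def by (simp add: axis_def)
qed

lemma partial_two_coords:
  fixes F :: "real \<Rightarrow> real \<Rightarrow> real" and x :: "real^'n::finite"
  assumes "a \<noteq> b"
    and "((\<lambda>s. F s (x$b)) has_real_derivative Fa) (at (x$a))"
    and "((\<lambda>s. F (x$a) s) has_real_derivative Fb) (at (x$b))"
  shows "partial i (\<lambda>y. F (y$a) (y$b)) x = (if i = a then Fa else if i = b then Fb else 0)"
proof -
  have coord: "(x + t *\<^sub>R axis i 1) $ j = x $ j + (if j = i then t else 0)" for t j
    by (simp add: axis_def)
  have shift: "deriv (\<lambda>t. G (c + t)) 0 = D" if "(G has_real_derivative D) (at c)" for G c D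
    using DERIV_shift[of G D 0 c] that by (simp add: add.commute DERIV_imp_deriv)
  show ?thesis
    using shift[OF assms(2)] shift[OF assms(3)] assms(1)
    unfolding partial_def coord by auto
qed

section \<open>Diagonal metrics and the Einstein--scalar equations\<close>

definition diag_matrix :: "('n \<Rightarrow> real) \<Rightarrow> real^'n^'n" where
  "diag_matrix d = (\<chi> i j. if i = j then d i else 0)"

lemma diag_matrix_nth [simp]: "diag_matrix d $ i $ j = (if i = j then d i else 0)"
  by (simp add: diag_matrix_def)

lemma diag_matrix_mult: "diag_matrix d ** diag_matrix d' = diag_matrix (\<lambda>k. d k * d' k)"
  by (simp add: vec_eq_iff matrix_matrix_mult_def if_distrib[of "\<lambda>u. _ * u"] cong: if_cong)

lemma matrix_inv_eqI:
  fixes A B :: "real^'n^'n"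
  assumes "A ** B = mat 1" "B ** A = mat 1"
  shows "matrix_inv A = B"
proof -
  let ?C = "matrix_inv A"
  have C: "A ** ?C = mat 1 \<and> ?C ** A = mat 1"
    unfolding matrix_inv_def using someI_ex[of "\<lambda>C. A ** C = mat 1 \<and> C ** A = mat 1"] assms by blast
  have "?C = ?C ** (A ** B)" using assms by (simp add: matrix_mul_rid)
  also have "\<dots> = B" using C by (simp add: matrix_mul_assoc matrix_mul_lid)
  finally show ?thesis .
qed

lemma diag_matrix_one: "diag_matrix (\<lambda>k. 1) = mat 1"
  by (simp add: vec_eq_iff mat_def)

lemma matrix_inv_diag_matrix:
  assumes "\<And>k. d k \<noteq> 0"
  shows "matrix_inv (diag_matrix d) = diag_matrix (\<lambda>k. 1 / d k)"
  by (rule matrix_inv_eqI) (simp_all add: diag_matrix_mult assms diag_matrix_one)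

lemma invertible_diag_matrix: "(\<And>k. d k \<noteq> 0) \<Longrightarrow> invertible (diag_matrix d)"
  unfolding invertible_def
  by (rule exI[of _ "diag_matrix (\<lambda>k. 1 / d k)"]) (simp add: diag_matrix_mult diag_matrix_one)

lemma transpose_diag_matrix: "transpose (diag_matrix d) = diag_matrix d"
  by (simp add: vec_eq_iff transpose_def)

lemma det_diag_matrix: "det (diag_matrix d) = prod d UNIV"
  by (subst det_diagonal) simp_all

lemma christoffel_diag:
  assumes g: "\<And>y. g y = diag_matrix (\<lambda>k. d k y)" and nz: "\<And>k. d k x \<noteq> 0"
  shows "christoffel g k i j x =
    ((if k = j then partial i (d k) x else 0) + (if k = i then partial j (d k) x else 0)
     - (if i = j then partial k (d i) x else 0)) / (2 * d k x)"
proof -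
  have ginv: "ginv g x k l = (if k = l then 1 / d k x else 0)" for l
    using nz by (simp add: ginv_def g matrix_inv_diag_matrix)
  have dg: "partial i (\<lambda>y. g y $ l $ j) x = (if l = j then partial i (d l) x else 0)" for i l j
    by (simp add: g partial_const)
  show ?thesis
    unfolding christoffel_def ginv dg by (simp add: if_distrib[of "\<lambda>u. u * _"] cong: if_cong)
qed

lemma matrix_inv_mult_left: "invertible A \<Longrightarrow> matrix_inv A ** A = mat 1"
  unfolding invertible_def matrix_inv_def by (rule someI2_ex) auto

lemma trace_ginv_metric:
  fixes g :: "real^'n::finite \<Rightarrow> real^'n^'n"
  assumes "invertible (g x)" "transpose (g x) = g x"
  shows "(\<Sum>s\<in>UNIV. \<Sum>n\<in>UNIV. ginv g x s n * g x $ s $ n) = real CARD('n)"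
proof -
  have sym: "g x $ s $ n = g x $ n $ s" for s n
    using assms(2) by (metis transpose_def vec_lambda_beta)
  have "(\<Sum>n\<in>UNIV. ginv g x s n * g x $ s $ n) = (matrix_inv (g x) ** g x) $ s $ s" for s
    by (simp add: ginv_def matrix_matrix_mult_def sym)
  then show ?thesis
    by (simp add: matrix_inv_mult_left[OF assms(1)] mat_def)
qed

lemma einstein_scalar_of_ricci:
  fixes g :: "real^'n::finite \<Rightarrow> real^'n^'n"
  assumes "invertible (g x)" "transpose (g x) = g x" "CARD('n) \<noteq> 2"
    and ricci: "\<And>m n. ricci g m n x
      = 2 * \<Lambda> / (real CARD('n) - 2) * g x $ m $ n + partial m \<phi> x * partial n \<phi> x"
  shows "einstein g m n x + \<Lambda> * g x $ m $ n = scalar_T g \<phi> m n x"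
proof -
  define c where "c = 2 * \<Lambda> / (real CARD('n) - 2)"
  let ?K = "\<Sum>a\<in>UNIV. \<Sum>b\<in>UNIV. ginv g x a b * partial a \<phi> x * partial b \<phi> x"
  have \<Lambda>: "\<Lambda> = c * (real CARD('n) - 2) / 2"
    using assms(3) by (simp add: c_def)
  have "scalar_curv g x = c * (\<Sum>s\<in>UNIV. \<Sum>n\<in>UNIV. ginv g x s n * g x $ s $ n) + ?K"
    by (simp add: scalar_curv_def ricci c_def algebra_simps sum.distrib sum_distrib_left)
  also have "\<dots> = c * real CARD('n) + ?K"
    by (simp add: trace_ginv_metric[of g x, OF assms(1,2)])
  finally show ?thesis
    unfolding einstein_def scalar_T_def ricci c_def[symmetric] by (simp add: \<Lambda> field_simps)
qed

lemma sin_neq_zero_between: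
  fixes u :: real
  assumes "0 < u" "u < 2 * pi" "u \<noteq> pi"
  shows "sin u \<noteq> 0"
proof
  assume "sin u = 0"
  then obtain i :: int where i: "u = of_int i * pi" by (auto simp: sin_zero_iff_int2)
  with assms have "0 < i" "i < 2"
    by (auto simp: zero_less_mult_iff mult_less_cancel_right2)
  then show False
    using i assms(3) by simp
qed

locale einstein_scalar_solution =
  fixes \<Lambda> \<epsilon> a0 b0 \<sigma> :: real
  assumes \<Lambda>_pos: "\<Lambda> > 0" and a0_pos: "a0 > 0" and b0_pos: "b0 > 0"
    and \<epsilon>: "\<epsilon> \<in> {1, -1}" and \<sigma>: "\<sigma> \<in> {1, -1}"
begin

definition q :: real where "q = sqrt (\<Lambda> / 2)"
definition e :: real where "e = \<epsilon> * q / 3"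
definition cot_theta :: "real \<Rightarrow> real" where "cot_theta z = cos (2 * q * z) / sin (2 * q * z)"
definition warp :: "real \<Rightarrow> real" where "warp z = (sin (2 * q * z) ^ 2) powr (1/6)"

lemma q_pos: "q > 0"
  using \<Lambda>_pos by (simp add: q_def)

lemma q_sq: "q^2 = \<Lambda> / 2"
  using \<Lambda>_pos by (simp add: q_def)

lemma e_sq: "e^2 = q^2 / 9"
  using \<epsilon> by (auto simp: e_def power_mult_distrib power_divide)

lemma theta_eq: "sol_theta \<Lambda> z = 2 * q * z"
proof -
  have "sqrt (2 * \<Lambda>) = sqrt ((2 * q)^2)"
    by (rule arg_cong[where f = sqrt]) (simp add: q_sq power_mult_distrib)
  also have "\<dots> = 2 * q"
    using q_pos by (subst real_sqrt_abs) simp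
  finally show ?thesis
    by (simp add: sol_theta_def)
qed

lemma sol_a_sq: "(sol_a \<Lambda> \<epsilon> a0 t z)^2 = a0^2 * exp (2 * e * t) * warp z"
proof -
  have "exp (\<epsilon> * (1/3) * sqrt (\<Lambda>/2) * t) ^ 2 = exp (2 * e * t)"
    by (simp add: e_def q_def power2_eq_square flip: exp_add)
  moreover have "(((sin (2 * q * z))^2) powr (1/12))^2 = warp z"
    by (simp add: warp_def power2_eq_square flip: powr_add)
  ultimately show ?thesis
    by (simp add: sol_a_def theta_eq power_mult_distrib)
qed

lemma sol_b_sq: "(sol_b \<Lambda> \<epsilon> b0 t z)^2 = b0^2 * exp (- (2 * e * t)) * warp z"
proof -
  have "exp (- \<epsilon> * (1/3) * sqrt (\<Lambda>/2) * t) ^ 2 = exp (- (2 * e * t))"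
    by (simp add: e_def q_def power2_eq_square flip: exp_add)
  moreover have "(((sin (2 * q * z))^2) powr (1/12))^2 = warp z"
    by (simp add: warp_def power2_eq_square flip: powr_add)
  ultimately show ?thesis
    by (simp add: sol_b_def theta_eq power_mult_distrib)
qed

lemma warp_pos: "sin (2 * q * z) \<noteq> 0 \<Longrightarrow> warp z > 0"
  by (simp add: warp_def)

lemma warp_deriv:
  assumes "sin (2 * q * z) \<noteq> 0"
  shows "(warp has_real_derivative 2 * (q/3) * cot_theta z * warp z) (at z)"
proof -
  have pos: "sin (2 * q * z) ^ 2 > 0" using assms by simp
  have "((\<lambda>z. sin (2*q*z) ^ 2) has_real_derivative 2 * sin (2*q*z) * (cos (2*q*z) * (2*q))) (at z)"
    by (auto intro!: derivative_eq_intros)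
  from DERIV_fun_powr[OF this pos, of "1/6"]
  have "(warp has_real_derivative (1/6) * (sin (2*q*z) ^ 2) powr (1/6 - 1)
      * (2 * sin (2*q*z) * (cos (2*q*z) * (2*q)))) (at z)"
    unfolding warp_def[abs_def] by simp
  moreover have "(sin (2*q*z) ^ 2) powr (1/6 - 1) = warp z / sin (2*q*z) ^ 2"
    using pos by (simp only: powr_diff) (simp add: warp_def)
  ultimately show ?thesis
    using assms by (simp add: cot_theta_def field_simps power2_eq_square)
qed

lemma cot_theta_deriv:
  assumes "sin (2 * q * z) \<noteq> 0"
  shows "(cot_theta has_real_derivative - 2 * q * (1 + cot_theta z ^ 2)) (at z)"
proof -
  have "(cot_theta has_real_derivative
      (- sin (2*q*z) * (2*q) * sin (2*q*z) - cos (2*q*z) * (cos (2*q*z) * (2*q)))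
      / (sin (2*q*z) * sin (2*q*z))) (at z)"
    unfolding cot_theta_def[abs_def] using assms by (auto intro!: derivative_eq_intros)
  moreover have "(- sin (2*q*z) * (2*q) * sin (2*q*z) - cos (2*q*z) * (cos (2*q*z) * (2*q)))
      / (sin (2*q*z) * sin (2*q*z)) = - 2 * q * (1 + cot_theta z ^ 2)"
    using assms by (simp add: cot_theta_def divide_simps power2_eq_square) algebra
  ultimately show ?thesis by simp
qed

abbreviation g :: "real^8 \<Rightarrow> real^8^8" where "g \<equiv> sol_metric \<Lambda> \<epsilon> a0 b0"
abbreviation U :: "(real^8) set" where "U \<equiv> sol_domain \<Lambda>"
abbreviation phi :: "real^8 \<Rightarrow> real" where "phi \<equiv> \<lambda>y. sol_phi \<Lambda> \<sigma> (y$4) (y$8)"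

lemma U_eq: "U = {x. sin (2 * q * x$8) \<noteq> 0}"
  by (simp add: sol_domain_def theta_eq)

lemma open_U: "open U"
  unfolding U_eq by (rule open_Collect_neq) (intro continuous_intros)+

definition metric_diag :: "8 \<Rightarrow> real \<Rightarrow> real \<Rightarrow> real" where
  "metric_diag k t z = (if k \<in> {1,2,3} then (sol_a \<Lambda> \<epsilon> a0 t z)^2 else if k = 4 then -1
     else if k \<in> {5,6,7} then - ((sol_b \<Lambda> \<epsilon> b0 t z)^2) else 1)"

lemma sol_metric_diag: "g x = diag_matrix (\<lambda>k. metric_diag k (x$4) (x$8))"
  unfolding sol_metric_def diag_matrix_def metric_diag_def vec_eq_iff
  using exhaust_8 by auto

lemma metric_diag_nonzero: "sin (2 * q * z) \<noteq> 0 \<Longrightarrow> metric_diag k t z \<noteq> 0"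
  using warp_pos[of z] a0_pos b0_pos by (simp add: metric_diag_def sol_a_sq sol_b_sq)

definition rate :: "8 \<Rightarrow> real" where
  "rate k = (if k \<in> {1,2,3} then e else if k \<in> {5,6,7} then - e else 0)"

definition warped :: "8 \<Rightarrow> real" where
  "warped k = (if k \<in> {4,8} then 0 else 1)"

text \<open>Up to a constant factor, \<open>\<bar>g\<^sub>k\<^sub>k\<bar> = exp (2 rate\<^sub>k x\<^sup>4) warp (x\<^sup>8)\<^bsup>warped\<^sub>k\<^esup>\<close>, so
  \<open>log_rate k i = \<partial>\<^sub>i ln \<bar>g\<^sub>k\<^sub>k\<bar> / 2\<close>.\<close>
definition log_rate :: "8 \<Rightarrow> 8 \<Rightarrow> real \<Rightarrow> real" where
  "log_rate k i z = (if i = 4 then rate k else if i = 8 then warped k * (q/3) * cot_theta z else 0)"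

lemma metric_diag_deriv_t:
  "((\<lambda>t. metric_diag k t z) has_real_derivative 2 * log_rate k 4 z * metric_diag k t z) (at t)"
  using exhaust_8[of k]
  by (elim disjE) (auto simp: metric_diag_def log_rate_def rate_def sol_a_sq sol_b_sq
      intro!: derivative_eq_intros)

lemma metric_diag_deriv_z:
  "sin (2 * q * z) \<noteq> 0 \<Longrightarrow>
    ((\<lambda>z. metric_diag k t z) has_real_derivative 2 * log_rate k 8 z * metric_diag k t z) (at z)"
  using exhaust_8[of k]
  by (elim disjE) (auto simp: metric_diag_def log_rate_def warped_def sol_a_sq sol_b_sq
      intro!: derivative_eq_intros warp_deriv)

lemma partial_metric_diag:
  assumes "x \<in> U"
  shows "partial i (\<lambda>y. metric_diag k (y$4) (y$8)) x
    = 2 * log_rate k i (x$8) * metric_diag k (x$4) (x$8)"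
proof -
  have "sin (2 * q * x$8) \<noteq> 0" using assms by (simp add: U_eq)
  then have "partial i (\<lambda>y. metric_diag k (y$4) (y$8)) x
    = (if i = 4 then 2 * log_rate k 4 (x$8) * metric_diag k (x$4) (x$8)
       else if i = 8 then 2 * log_rate k 8 (x$8) * metric_diag k (x$4) (x$8) else 0)"
    by (intro partial_two_coords metric_diag_deriv_t metric_diag_deriv_z) simp_all
  then show ?thesis
    by (simp add: log_rate_def)
qed

text \<open>The last term is \<open>\<partial>\<^sub>k g\<^sub>i\<^sub>i / (2 g\<^sub>k\<^sub>k)\<close>: it vanishes unless \<open>k \<in> {4, 8}\<close>, where
  \<open>g\<^sub>k\<^sub>k = \<plusminus>1\<close> and so \<open>1 / g\<^sub>k\<^sub>k = g\<^sub>k\<^sub>k\<close>.\<close>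
definition christoffel_form :: "8 \<Rightarrow> 8 \<Rightarrow> 8 \<Rightarrow> real \<Rightarrow> real \<Rightarrow> real" where
  "christoffel_form k i j t z =
     (if k = j then log_rate k i z else 0) + (if k = i then log_rate k j z else 0)
     - (if i = j then log_rate i k z * metric_diag k t z * metric_diag i t z else 0)"

lemma log_rate_div_metric_diag:
  "log_rate i k z / metric_diag k t z = log_rate i k z * metric_diag k t z"
  using exhaust_8[of k] by (elim disjE) (simp_all add: log_rate_def metric_diag_def)

lemma log_rate_self [simp]: "log_rate k k z = 0"
  by (simp add: log_rate_def rate_def warped_def)

lemma christoffel_sol:
  assumes "x \<in> U"
  shows "christoffel g k i j x = christoffel_form k i j (x$4) (x$8)"
proof -
  have "sin (2 * q * x$8) \<noteq> 0" using assms by (simp add: U_eq)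
  then have nz: "metric_diag k (x$4) (x$8) \<noteq> 0" for k
    by (rule metric_diag_nonzero)
  have "christoffel g k i j x
    = ((if k = j then 2 * log_rate k i (x$8) * metric_diag k (x$4) (x$8) else 0)
       + (if k = i then 2 * log_rate k j (x$8) * metric_diag k (x$4) (x$8) else 0)
       - (if i = j then 2 * log_rate i k (x$8) * metric_diag i (x$4) (x$8) else 0))
      / (2 * metric_diag k (x$4) (x$8))"
    by (simp add: christoffel_diag[where d = "\<lambda>k y. metric_diag k (y$4) (y$8)", OF sol_metric_diag nz]
        partial_metric_diag[OF assms])
  also have "\<dots> = christoffel_form k i j (x$4) (x$8)"
    using nz[of k]
    by (cases "k = j"; cases "k = i"; cases "i = j")
      (simp_all add: christoffel_form_def add_divide_distrib diff_divide_distrib flip: log_rate_div_metric_diag)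
  finally show ?thesis .
qed

definition log_rate_deriv :: "8 \<Rightarrow> 8 \<Rightarrow> 8 \<Rightarrow> real \<Rightarrow> real" where
  "log_rate_deriv m k i z =
     (if m = 8 \<and> i = 8 then warped k * (q/3) * (- 2 * q * (1 + cot_theta z ^ 2)) else 0)"

definition christoffel_form_deriv :: "8 \<Rightarrow> 8 \<Rightarrow> 8 \<Rightarrow> 8 \<Rightarrow> real \<Rightarrow> real \<Rightarrow> real" where
  "christoffel_form_deriv m k i j t z =
     (if k = j then log_rate_deriv m k i z else 0) + (if k = i then log_rate_deriv m k j z else 0)
     - (if i = j then (log_rate_deriv m i k z
            + 2 * log_rate i k z * (log_rate k m z + log_rate i m z))
          * metric_diag k t z * metric_diag i t z else 0)"

lemma log_rate_deriv_z:
  "sin (2 * q * z) \<noteq> 0 \<Longrightarrow>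
    ((\<lambda>z. log_rate k i z) has_real_derivative log_rate_deriv 8 k i z) (at z)"
  unfolding log_rate_def log_rate_deriv_def
  by (cases "i = 4"; cases "i = 8") (auto intro!: derivative_eq_intros cot_theta_deriv)

lemma log_rate_deriv_self [simp]: "log_rate_deriv m k k z = 0"
  by (simp add: log_rate_deriv_def warped_def)

lemma christoffel_form_deriv_t:
  "((\<lambda>t. christoffel_form k i j t z) has_real_derivative christoffel_form_deriv 4 k i j t z) (at t)"
  unfolding christoffel_form_def christoffel_form_deriv_def
  by (auto intro!: derivative_eq_intros metric_diag_deriv_t simp: log_rate_deriv_def algebra_simps)

lemma christoffel_form_deriv_z:
  "sin (2 * q * z) \<noteq> 0 \<Longrightarrow>
    ((\<lambda>z. christoffel_form k i j t z) has_real_derivative christoffel_form_deriv 8 k i j t z) (at z)"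
  unfolding christoffel_form_def christoffel_form_deriv_def
  by (auto intro!: derivative_eq_intros metric_diag_deriv_z log_rate_deriv_z simp: algebra_simps)

lemma partial_christoffel_sol:
  assumes "x \<in> U"
  shows "partial m (\<lambda>y. christoffel g k i j y) x = christoffel_form_deriv m k i j (x$4) (x$8)"
proof -
  have "sin (2 * q * x$8) \<noteq> 0" using assms by (simp add: U_eq)
  have "partial m (\<lambda>y. christoffel g k i j y) x
      = partial m (\<lambda>y. christoffel_form k i j (y$4) (y$8)) x"
    using open_U assms by (rule partial_cong_open) (rule christoffel_sol)
  also have "\<dots> = (if m = 4 then christoffel_form_deriv 4 k i j (x$4) (x$8)
      else if m = 8 then christoffel_form_deriv 8 k i j (x$4) (x$8) else 0)"
    using \<open>sin (2 * q * x$8) \<noteq> 0\<close>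
    by (intro partial_two_coords christoffel_form_deriv_t christoffel_form_deriv_z) simp_all
  also have "\<dots> = christoffel_form_deriv m k i j (x$4) (x$8)"
    by (simp add: christoffel_form_deriv_def log_rate_deriv_def log_rate_def)
  finally show ?thesis .
qed

lemmas ricci_unfold = sum_UNIV_8 christoffel_form_deriv_def christoffel_form_def
  log_rate_deriv_def log_rate_def rate_def warped_def metric_diag_def

text \<open>The 64 entries are checked one by one; the only relation needed is \<open>e\<^sup>2 = q\<^sup>2/9\<close>,
  i.e. \<open>\<epsilon>\<^sup>2 = 1\<close>.\<close>
lemma ricci_closed_form:
  "(\<Sum>r\<in>UNIV. christoffel_form_deriv r r n m t z - christoffel_form_deriv n r r m t z
      + (\<Sum>l\<in>UNIV. christoffel_form r r l t z * christoffel_form l n m t z)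
      - (\<Sum>l\<in>UNIV. christoffel_form r n l t z * christoffel_form l r m t z))
   = (if m = n then 2 * q^2 / 3 * metric_diag m t z else 0)
     + (if m = 8 \<and> n = 8 then 10/3 * q^2 * (1 + cot_theta z ^ 2) else 0)"
  using exhaust_8[of m] exhaust_8[of n]
  by (elim disjE; hypsubst;
      simp only: ricci_unfold numeral_8_neq insert_iff empty_iff simp_thms if_True if_False refl;
      insert e_sq; simp add: field_simps power2_eq_square)

definition phi_deriv :: "real \<Rightarrow> real" where
  "phi_deriv z = 2 * \<sigma> * sqrt (5/6) * q / sin (2 * q * z)"

lemma sol_phi_deriv:
  assumes "sin (2 * q * z) \<noteq> 0"
  shows "((\<lambda>z. sol_phi \<Lambda> \<sigma> t z) has_real_derivative phi_deriv z) (at z)"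
proof -
  have double: "sin (2 * q * z) = 2 * sin (q * z) * cos (q * z)"
    using sin_double[of "q * z"] by (simp add: mult.assoc)
  then have sc: "sin (q * z) \<noteq> 0" "cos (q * z) \<noteq> 0"
    using assms by auto
  have phi: "(\<lambda>z. sol_phi \<Lambda> \<sigma> t z) = (\<lambda>z. \<sigma> * (1/2) * sqrt (5/6) * ln ((tan (q * z))^2))"
    by (simp add: sol_phi_def theta_eq)
  have phi': "phi_deriv z = \<sigma> * sqrt (5/6) * q / (sin (q * z) * cos (q * z))"
    unfolding phi_deriv_def double by simp
  have "tan (q * z) ^ 2 > 0"
    using sc by (simp add: tan_def)
  then show ?thesis
    unfolding phi phi' using sc by (auto intro!: derivative_eq_intros simp: tan_def field_simps power2_eq_square)
      (use sin_cos_squared_add[of "z * q"] in algebra)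
qed

lemma partial_sol_phi:
  assumes "x \<in> U"
  shows "partial i phi x = (if i = 8 then phi_deriv (x$8) else 0)"
proof -
  have "sin (2 * q * x$8) \<noteq> 0" using assms by (simp add: U_eq)
  then have "partial i phi x = (if i = 4 then 0 else if i = 8 then phi_deriv (x$8) else 0)"
    by (intro partial_two_coords sol_phi_deriv) (simp_all add: sol_phi_def)
  then show ?thesis by simp
qed

lemma phi_deriv_sq:
  assumes "sin (2 * q * z) \<noteq> 0"
  shows "phi_deriv z ^ 2 = 10/3 * q^2 * (1 + cot_theta z ^ 2)"
proof -
  have "\<sigma>^2 = 1" using \<sigma> by auto
  then have "phi_deriv z ^ 2 = 10/3 * q^2 / (sin (2 * q * z))^2"
    by (simp add: phi_deriv_def power_mult_distrib power_divide)
  also have "\<dots> = 10/3 * q^2 * (1 + cot_theta z ^ 2)"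
    using assms sin_cos_squared_add[of "2 * q * z"]
    by (simp add: cot_theta_def field_simps power2_eq_square)
  finally show ?thesis .
qed

lemma ricci_sol:
  assumes "x \<in> U"
  shows "ricci g m n x = \<Lambda> / 3 * g x $ m $ n
    + partial m phi x * partial n phi x"
proof -
  have "sin (2 * q * x$8) \<noteq> 0" using assms by (simp add: U_eq)
  have "ricci g m n x = (if m = n then 2 * q^2 / 3 * metric_diag m (x$4) (x$8) else 0)
      + (if m = 8 \<and> n = 8 then 10/3 * q^2 * (1 + cot_theta (x$8) ^ 2) else 0)"
    by (simp add: ricci_def riemann_def partial_christoffel_sol[OF assms] christoffel_sol[OF assms]
        ricci_closed_form)
  also have "\<dots> = \<Lambda> / 3 * g x $ m $ n + (if m = 8 \<and> n = 8 then phi_deriv (x$8) ^ 2 else 0)"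
    by (simp add: sol_metric_diag q_sq phi_deriv_sq[OF \<open>sin (2 * q * x$8) \<noteq> 0\<close>])
  also have "\<dots> = \<Lambda> / 3 * g x $ m $ n
      + partial m phi x * partial n phi x"
    by (simp add: partial_sol_phi[OF assms] power2_eq_square)
  finally show ?thesis .
qed

lemma einstein_sol:
  assumes "x \<in> U"
  shows "einstein g m n x + \<Lambda> * g x $ m $ n = scalar_T g phi m n x"
proof (rule einstein_scalar_of_ricci)
  have "sin (2 * q * x$8) \<noteq> 0" using assms by (simp add: U_eq)
  then show "invertible (g x)"
    unfolding sol_metric_diag by (intro invertible_diag_matrix metric_diag_nonzero)
  show "transpose (g x) = g x"
    unfolding sol_metric_diag by (rule transpose_diag_matrix)
qed (simp_all add: ricci_sol[OF assms])

lemma ginv_sol: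
  assumes "y \<in> U"
  shows "ginv g y m n = (if m = n then 1 / metric_diag m (y$4) (y$8) else 0)"
proof -
  have "sin (2 * q * y$8) \<noteq> 0" using assms by (simp add: U_eq)
  then show ?thesis
    by (simp add: ginv_def sol_metric_diag matrix_inv_diag_matrix metric_diag_nonzero)
qed

lemma warp_pow_6:
  assumes "sin (2 * q * z) \<noteq> 0"
  shows "warp z ^ 6 = (sin (2 * q * z))^2"
proof -
  have "warp z ^ 6 = warp z powr real 6"
    using warp_pos[OF assms] by (simp add: powr_realpow)
  also have "\<dots> = (sin (2 * q * z))^2"
    unfolding warp_def powr_powr by simp
  finally show ?thesis .
qed

lemma det_sol: "det (g y) = ((sol_a \<Lambda> \<epsilon> a0 (y$4) (y$8))^2 * (sol_b \<Lambda> \<epsilon> b0 (y$4) (y$8))^2)^3"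
  unfolding sol_metric_diag det_diag_matrix prod_UNIV_8
  by (simp add: metric_diag_def numeral_8_neq) algebra

lemma sol_a_sq_mult_sol_b_sq: "(sol_a \<Lambda> \<epsilon> a0 t z)^2 * (sol_b \<Lambda> \<epsilon> b0 t z)^2 = (a0 * b0 * warp z)^2"
proof -
  have "exp (2 * e * t) * exp (- (2 * e * t)) = 1"
    by (simp add: exp_minus_inverse)
  then show ?thesis
    unfolding sol_a_sq sol_b_sq by algebra
qed

lemma sqrt_det_sol:
  assumes "y \<in> U"
  shows "sqrt \<bar>det (g y)\<bar> = a0^3 * b0^3 * \<bar>sin (2 * q * y$8)\<bar>"
proof -
  have "det (g y) = (a0 * b0)^6 * warp (y$8)^6"
    unfolding det_sol sol_a_sq_mult_sol_b_sq by (simp add: power_mult_distrib flip: power_mult)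
  also have "\<dots> = (a0^3 * b0^3 * sin (2 * q * y$8))^2"
    using assms by (simp add: U_eq warp_pow_6 power_mult_distrib flip: power_mult)
  finally show ?thesis
    using a0_pos b0_pos by (simp add: abs_mult)
qed

lemma flux_sol:
  assumes "y \<in> U"
  shows "sqrt \<bar>det (g y)\<bar> * (\<Sum>n\<in>UNIV. ginv g y m n * partial n phi y)
    = (if m = 8 then 2 * \<sigma> * sqrt (5/6) * q * a0^3 * b0^3 * sgn (sin (2 * q * y$8)) else 0)"
proof -
  have "ginv g y m n * partial n phi y
      = (if n = m then (if m = 8 then phi_deriv (y$8) else 0) else 0)" for n
    by (simp add: ginv_sol[OF assms] partial_sol_phi[OF assms] metric_diag_def)
  moreover have "sin (2 * q * y$8) \<noteq> 0"
    using assms by (simp add: U_eq)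
  ultimately show ?thesis
    unfolding sqrt_det_sol[OF assms] by (simp add: phi_deriv_def abs_sgn)
qed

lemma box_sol:
  assumes "x \<in> U"
  shows "box g phi x = 0"
proof -
  define V where "V = {y :: real^8. 0 < sin (2 * q * y$8) * sin (2 * q * x$8)}"
  have "open V"
    unfolding V_def by (intro open_Collect_less continuous_intros)
  moreover have "x \<in> V"
    using assms by (simp add: V_def U_eq flip: power2_eq_square)
  moreover have "sqrt \<bar>det (g y)\<bar> *
      (\<Sum>n\<in>UNIV. ginv g y m n * partial n phi y)
    = (if m = 8 then 2 * \<sigma> * sqrt (5/6) * q * a0^3 * b0^3 * sgn (sin (2 * q * x$8)) else 0)"
    if "y \<in> V" for y m
  proof -
    have "y \<in> U" and "sgn (sin (2 * q * y$8)) = sgn (sin (2 * q * x$8))"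
      using that by (auto simp: V_def U_eq zero_less_mult_iff)
    then show ?thesis
      by (simp add: flux_sol)
  qed
  ultimately have "partial m (\<lambda>y. sqrt \<bar>det (g y)\<bar> *
      (\<Sum>n\<in>UNIV. ginv g y m n * partial n phi y)) x
    = partial m (\<lambda>y. if m = 8
      then 2 * \<sigma> * sqrt (5/6) * q * a0^3 * b0^3 * sgn (sin (2 * q * x$8)) else 0) x" for m
    by (intro partial_cong_open)
  then show ?thesis
    by (simp add: box_def partial_const)
qed

lemma log_ratio_sol:
  assumes "sin (2 * q * z) \<noteq> 0"
  shows "ln (sol_b \<Lambda> \<epsilon> b0 t z / sol_a \<Lambda> \<epsilon> a0 t z) = ln (b0 / a0) - 2 * e * t"
proof -
  have "sol_b \<Lambda> \<epsilon> b0 t z / sol_a \<Lambda> \<epsilon> a0 t z = b0 / a0 * exp (- (2 * e * t))"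
    using assms a0_pos b0_pos
    by (simp add: sol_a_def sol_b_def theta_eq e_def q_def field_simps flip: exp_add)
  then show ?thesis
    using a0_pos b0_pos by (simp add: ln_div ln_mult)
qed

lemma expansion_rate_sol:
  assumes "x \<in> U"
  shows "(1/2) * partial 4 (\<lambda>y. ln (sol_b \<Lambda> \<epsilon> b0 (y$4) (y$8) / sol_a \<Lambda> \<epsilon> a0 (y$4) (y$8))) x
    = - \<epsilon> * (1/3) * sqrt (\<Lambda>/2)"
proof -
  have "partial 4 (\<lambda>y. ln (sol_b \<Lambda> \<epsilon> b0 (y$4) (y$8) / sol_a \<Lambda> \<epsilon> a0 (y$4) (y$8))) x
      = partial 4 (\<lambda>y. ln (b0 / a0) - 2 * e * y$4) x"
    using open_U assms by (rule partial_cong_open) (simp add: U_eq log_ratio_sol)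
  also have "\<dots> = - 2 * e"
    by (subst partial_coord[where D = "- 2 * e"]) (auto intro!: derivative_eq_intros)
  finally show ?thesis
    by (simp add: e_def q_def)
qed

lemma period_eq: "pi * sqrt (2 / \<Lambda>) = pi / q"
proof -
  have "2 / \<Lambda> = (1 / q)^2"
    using \<Lambda>_pos by (simp add: q_sq power_divide)
  then show ?thesis
    using q_pos by simp
qed

lemma theta_add: "sol_theta \<Lambda> (z + p) = sol_theta \<Lambda> z + 2 * q * p"
  by (simp add: theta_eq algebra_simps)

lemma common_period_sol: "common_period \<Lambda> \<epsilon> \<sigma> a0 b0 (pi * sqrt (2 / \<Lambda>))"
proof -
  have "sol_theta \<Lambda> (z + pi * sqrt (2 / \<Lambda>)) = sol_theta \<Lambda> z + 2 * pi" for z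
    using q_pos by (simp add: theta_add period_eq)
  then show ?thesis
    unfolding common_period_def by (simp add: sol_a_def sol_b_def sol_phi_def add_divide_distrib)
qed

text \<open>A shift by \<open>0 < p < \<pi>/q\<close> moves \<open>\<theta>\<close> by \<open>2qp \<in> (0, 2\<pi>)\<close>. Unless \<open>2qp = \<pi>\<close>, some
  \<open>\<theta>\<close> with \<open>sin \<theta> \<noteq> 0\<close> is moved onto \<open>\<pi>\<close>, leaving the domain; a shift of \<open>\<theta>\<close> by \<open>\<pi>\<close> turns
  \<open>tan\<^sup>2 (\<theta>/2)\<close> into \<open>cot\<^sup>2 (\<theta>/2)\<close>, which changes \<open>\<phi>\<close> at \<open>\<theta> = 2\<pi>/3\<close>.\<close>
lemma not_common_period_below:
  assumes "0 < p" "p < pi * sqrt (2 / \<Lambda>)"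
  shows "\<not> common_period \<Lambda> \<epsilon> \<sigma> a0 b0 p"
proof
  assume period: "common_period \<Lambda> \<epsilon> \<sigma> a0 b0 p"
  define d where "d = q * p"
  have d: "0 < d" "d < pi"
    using assms q_pos unfolding d_def period_eq by (auto simp: field_simps)
  show False
  proof (cases "d = pi / 2")
    case False
    define z where "z = (pi / 2 - d) / q"
    have "sol_theta \<Lambda> z = pi - 2 * d"
      using q_pos by (simp add: theta_eq z_def field_simps)
    moreover have "sin (pi - 2 * d) \<noteq> 0"
      using sin_neq_zero_between[of "2 * d"] d False by auto
    ultimately have "sin (sol_theta \<Lambda> (z + p)) \<noteq> 0"
      using period unfolding common_period_def by auto
    moreover have "sol_theta \<Lambda> (z + p) = pi"
      using q_pos by (simp add: theta_eq z_def d_def field_simps)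
    ultimately show False
      by simp
  next
    case True
    define z where "z = (pi / 3) / q"
    have \<theta>: "sol_theta \<Lambda> z = 2 * pi / 3"
      using q_pos by (simp add: theta_eq z_def field_simps)
    have \<theta>_shift: "sol_theta \<Lambda> (z + p) / 2 = - (pi / 6) + pi"
      using True unfolding theta_add \<theta> by (simp add: d_def field_simps)
    have "sin (sol_theta \<Lambda> z) \<noteq> 0"
      unfolding \<theta> using sin_neq_zero_between[of "2 * pi / 3"] by simp
    then have "sol_phi \<Lambda> \<sigma> 0 (z + p) = sol_phi \<Lambda> \<sigma> 0 z"
      using period unfolding common_period_def by blast
    moreover have "sol_phi \<Lambda> \<sigma> 0 z = \<sigma> * (1/2) * sqrt (5/6) * ln 3"
      unfolding sol_phi_def \<theta> by (simp add: tan_60)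
    moreover have "sol_phi \<Lambda> \<sigma> 0 (z + p) = - (\<sigma> * (1/2) * sqrt (5/6) * ln 3)"
      unfolding sol_phi_def \<theta>_shift tan_periodic_pi tan_minus by (simp add: tan_30 power_divide ln_div)
    moreover have "\<sigma> \<noteq> 0"
      using \<sigma> by auto
    ultimately show False
      by simp
  qed
qed

lemma period_eq_2pi_iff: "pi * sqrt (2 / \<Lambda>) = 2 * pi \<longleftrightarrow> \<Lambda> = 1/2"
proof -
  have "pi * sqrt (2 / \<Lambda>) = 2 * pi \<longleftrightarrow> sqrt (2 / \<Lambda>) = sqrt 4"
    by simp
  also have "\<dots> \<longleftrightarrow> 2 / \<Lambda> = 4"
    by (rule real_sqrt_eq_iff)
  also have "\<dots> \<longleftrightarrow> \<Lambda> = 1/2"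
    using \<Lambda>_pos by (auto simp: field_simps)
  finally show ?thesis .
qed

end

theorem mainTheorem1:
  fixes \<Lambda> a0 b0 \<epsilon> \<sigma> :: real
  assumes "\<Lambda> > 0" and "a0 > 0" and "b0 > 0"
    and "\<epsilon> \<in> {1, -1}" and "\<sigma> \<in> {1, -1}"
  defines "g \<equiv> sol_metric \<Lambda> \<epsilon> a0 b0"
    and "\<phi> \<equiv> (\<lambda>x::real^8. sol_phi \<Lambda> \<sigma> (x$4) (x$8))"
    and "U \<equiv> sol_domain \<Lambda>"
  shows "open U
    \<and> (\<forall>x\<in>U. \<forall>m n. einstein g m n x + \<Lambda> * g x $ m $ n = scalar_T g \<phi> m n x)
    \<and> (\<forall>x\<in>U. box g \<phi> x = 0)
    \<and> (\<forall>x\<in>U. (1/2) * partial 4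
           (\<lambda>y. ln (sol_b \<Lambda> \<epsilon> b0 (y$4) (y$8) / sol_a \<Lambda> \<epsilon> a0 (y$4) (y$8))) x
         = - \<epsilon> * (1/3) * sqrt (\<Lambda>/2))
    \<and> common_period \<Lambda> \<epsilon> \<sigma> a0 b0 (pi * sqrt (2/\<Lambda>))
    \<and> (\<forall>q. 0 < q \<and> q < pi * sqrt (2/\<Lambda>) \<longrightarrow> \<not> common_period \<Lambda> \<epsilon> \<sigma> a0 b0 q)
    \<and> (pi * sqrt (2/\<Lambda>) = 2 * pi \<longleftrightarrow> \<Lambda> = 1/2)"
proof -
  interpret einstein_scalar_solution \<Lambda> \<epsilon> a0 b0 \<sigma>
    using assms(1-5) by unfold_locales
  show ?thesis
    unfolding g_def \<phi>_def U_def
    using open_U einstein_sol box_sol expansion_rate_sol common_period_sol not_common_period_below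
      period_eq_2pi_iff
    by blast
qed

end
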